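(* Let $k$ be a binary kernel on a non-empty set $\mathcal X$ such that the quotient set $\mathcal Q_k=\mathcal X_{\mathrm{ref}}/\!\sim_k$ is finite, say $\mathcal Q_k=\{Q_1,\dots,Q_d\}$. Define $\phi:\mathcal X\to\{0,1\}^d$ by $\phi(x)_i=1$ if $x\in\mathcal X_{\mathrm{ref}}$ and $Q_i=[x]_k$, and $\phi(x)_i=0$ otherwise. Then $\phi$ is a feature map of $k$, i.e. $k(x,y)=\langle\phi(x),\phi(y)\rangle$ for all $x,y\in\mathcal X$.
   Context: A kernel on $\mathcal X$ is a symmetric positive semidefinite function $k:\mathcal X\times\mathcal X\to\mathbb R$. A kernel $k$ is binary if $k(x,y)\in\{0,1\}$ for all $x,y$. The relation induced by $k$ is $\sim_k=\{(x,y): k(x,y)=1\}$. Let $\mathcal X_{\mathrm{ref}}=\{x\in\mathcal X: x\sim_k x\}$; on $\mathcal X_{\mathrm{ref}}$ the relation $\sim_k$ is an equivalence relation, $[x]_k$ denotes the equivalence class of $x\in\mathcal X_{\mathrm{ref}}$, and $\mathcal Q_k$ is the set of equivalence classes. *)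

theory Defs
  imports Complex_Main
begin

definition kernel_on :: "'a set \<Rightarrow> ('a \<Rightarrow> 'a \<Rightarrow> real) \<Rightarrow> bool" where
  "kernel_on X k \<longleftrightarrow>
     (\<forall>x\<in>X. \<forall>y\<in>X. k x y = k y x) \<and>
     (\<forall>(n::nat) (xs::nat \<Rightarrow> 'a) (c::nat \<Rightarrow> real). (\<forall>i<n. xs i \<in> X) \<longrightarrow>
        0 \<le> (\<Sum>i<n. \<Sum>j<n. c i * c j * k (xs i) (xs j)))"

definition binary_kernel_on :: "'a set \<Rightarrow> ('a \<Rightarrow> 'a \<Rightarrow> real) \<Rightarrow> bool" where
  "binary_kernel_on X k \<longleftrightarrow> kernel_on X k \<and> (\<forall>x\<in>X. \<forall>y\<in>X. k x y \<in> {0, 1})"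

definition krel :: "'a set \<Rightarrow> ('a \<Rightarrow> 'a \<Rightarrow> real) \<Rightarrow> ('a \<times> 'a) set" where
  "krel X k = {(x, y). x \<in> X \<and> y \<in> X \<and> k x y = 1}"

definition Xref :: "'a set \<Rightarrow> ('a \<Rightarrow> 'a \<Rightarrow> real) \<Rightarrow> 'a set" where
  "Xref X k = {x \<in> X. (x, x) \<in> krel X k}"

text \<open>The relation restricted to X_ref (an equivalence relation there).\<close>
definition krel_ref :: "'a set \<Rightarrow> ('a \<Rightarrow> 'a \<Rightarrow> real) \<Rightarrow> ('a \<times> 'a) set" where
  "krel_ref X k = krel X k \<inter> (Xref X k \<times> Xref X k)"

definition kclass :: "'a set \<Rightarrow> ('a \<Rightarrow> 'a \<Rightarrow> real) \<Rightarrow> 'a \<Rightarrow> 'a set" where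
  "kclass X k x = krel_ref X k `` {x}"

definition Qk :: "'a set \<Rightarrow> ('a \<Rightarrow> 'a \<Rightarrow> real) \<Rightarrow> 'a set set" where
  "Qk X k = Xref X k // krel_ref X k"

end

theory Submission
  imports Defs
begin

text \<open>For a binary kernel, positive semidefiniteness on two points shows that a point with
  k x x = 0 is orthogonal to everything, and on three points (with coefficients 1, -1, 1)
  that the relation k x y = 1 is transitive. Hence on X_ref the relation is an equivalence
  whose indicator is k itself, and the one-hot encoding of the classes is a feature map.\<close>

lemma kernel_on_two_points_nonneg:
  assumes "kernel_on X k" "x \<in> X" "y \<in> X"
  shows "0 \<le> a * a * k x x + a * b * k x y + b * a * k y x + b * b * k y y"
proof -
  define xs :: "nat \<Rightarrow> 'a" where "xs = (\<lambda>i. if i = 0 then x else y)"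
  define c :: "nat \<Rightarrow> real" where "c = (\<lambda>i. if i = 0 then a else b)"
  have "\<forall>i<2. xs i \<in> X" using assms by (auto simp: xs_def)
  then have "0 \<le> (\<Sum>i<2. \<Sum>j<2. c i * c j * k (xs i) (xs j))"
    using assms(1) unfolding kernel_on_def by blast
  then show ?thesis by (simp add: numeral_2_eq_2 xs_def c_def)
qed

lemma kernel_on_three_points_nonneg:
  assumes "kernel_on X k" "x \<in> X" "y \<in> X" "z \<in> X"
  shows "0 \<le> k x x + k y y + k z z - k x y - k y x + k x z + k z x - k y z - k z y"
proof -
  define xs :: "nat \<Rightarrow> 'a" where "xs = (\<lambda>i. if i = 0 then x else if i = 1 then y else z)"
  define c :: "nat \<Rightarrow> real" where "c = (\<lambda>i. if i = 1 then -1 else 1)"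
  have "\<forall>i<3. xs i \<in> X" using assms by (auto simp: xs_def)
  then have "0 \<le> (\<Sum>i<3. \<Sum>j<3. c i * c j * k (xs i) (xs j))"
    using assms(1) unfolding kernel_on_def by blast
  then show ?thesis by (simp add: numeral_3_eq_3 xs_def c_def)
qed

lemma binary_kernel_on_kernel_on: "binary_kernel_on X k \<Longrightarrow> kernel_on X k"
  unfolding binary_kernel_on_def by blast

lemma binary_kernel_on_sym:
  assumes "binary_kernel_on X k" "x \<in> X" "y \<in> X"
  shows "k x y = k y x"
  using assms unfolding binary_kernel_on_def kernel_on_def by blast

lemma binary_kernel_on_cases:
  assumes "binary_kernel_on X k" "x \<in> X" "y \<in> X"
  shows "k x y = 0 \<or> k x y = 1"
  using assms unfolding binary_kernel_on_def by blast

lemma binary_kernel_on_zero_diag: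
  assumes k: "binary_kernel_on X k" and "x \<in> X" "y \<in> X" "k x x = 0"
  shows "k x y = 0"
proof (rule ccontr)
  assume "k x y \<noteq> 0"
  then have "k x y = 1"
    using binary_kernel_on_cases[OF k assms(2,3)] by simp
  moreover have "k y x = 1"
    using \<open>k x y = 1\<close> binary_kernel_on_sym[OF k assms(2,3)] by simp
  moreover have "k y y \<le> 1"
    using binary_kernel_on_cases[OF k \<open>y \<in> X\<close> \<open>y \<in> X\<close>] by auto
  moreover have "0 \<le> 1 * 1 * k x x + 1 * (-1) * k x y + (-1) * 1 * k y x + (-1) * (-1) * k y y"
    by (rule kernel_on_two_points_nonneg[OF binary_kernel_on_kernel_on[OF k] assms(2,3)])
  ultimately show False using \<open>k x x = 0\<close> by simp
qed

lemma binary_kernel_on_trans: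
  assumes k: "binary_kernel_on X k" and "x \<in> X" "y \<in> X" "z \<in> X" "k x y = 1" "k y z = 1"
  shows "k x z = 1"
proof (rule ccontr)
  assume "k x z \<noteq> 1"
  then have "k x z = 0" using binary_kernel_on_cases[OF k assms(2,4)] by simp
  moreover have "k z x = 0" "k y x = 1" "k z y = 1"
    using assms(5,6) \<open>k x z = 0\<close> binary_kernel_on_sym[OF k] assms(2-4) by metis+
  moreover have "k x x \<le> 1" "k y y \<le> 1" "k z z \<le> 1"
    using binary_kernel_on_cases[OF k] assms(2-4) by (metis order_refl zero_le_one)+
  moreover have "0 \<le> k x x + k y y + k z z - k x y - k y x + k x z + k z x - k y z - k z y"
    by (rule kernel_on_three_points_nonneg[OF binary_kernel_on_kernel_on[OF k] assms(2-4)])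
  ultimately show False using assms(5,6) by linarith
qed

lemma Xref_iff: "x \<in> Xref X k \<longleftrightarrow> x \<in> X \<and> k x x = 1"
  by (auto simp: Xref_def krel_def)

lemma kclass_eq: "x \<in> Xref X k \<Longrightarrow> kclass X k x = {y \<in> Xref X k. k x y = 1}"
  by (auto simp: kclass_def krel_ref_def krel_def Xref_def)

lemma kclass_in_Qk: "x \<in> Xref X k \<Longrightarrow> kclass X k x \<in> Qk X k"
  unfolding Qk_def kclass_def by (rule quotientI)

lemma binary_kernel_on_kclass_eq_iff:
  assumes k: "binary_kernel_on X k" and x: "x \<in> Xref X k" and y: "y \<in> Xref X k"
  shows "kclass X k x = kclass X k y \<longleftrightarrow> k x y = 1"
proof
  assume "kclass X k x = kclass X k y"
  moreover have "y \<in> kclass X k y" using y by (simp add: kclass_eq Xref_iff)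
  ultimately have "y \<in> kclass X k x" by simp
  then show "k x y = 1" using x by (simp add: kclass_eq)
next
  assume xy: "k x y = 1"
  have "k y x = 1" using xy binary_kernel_on_sym[OF k] x y by (simp add: Xref_iff)
  then show "kclass X k x = kclass X k y"
    using x y xy binary_kernel_on_trans[OF k] by (auto simp: kclass_eq Xref_iff)
qed

lemma binary_kernel_on_eq_same_class:
  assumes k: "binary_kernel_on X k" and "x \<in> X" "y \<in> X"
  shows "k x y = (if x \<in> Xref X k \<and> y \<in> Xref X k \<and> kclass X k x = kclass X k y then 1 else 0)"
proof (cases "x \<in> Xref X k \<and> y \<in> Xref X k")
  case True
  then show ?thesis
    using binary_kernel_on_kclass_eq_iff[OF k] binary_kernel_on_cases[OF k assms(2,3)] by auto
next
  case False
  then have "k x x = 0 \<or> k y y = 0"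
    using binary_kernel_on_cases[OF k] assms(2,3) by (auto simp: Xref_iff)
  then have "k x y = 0"
    using binary_kernel_on_zero_diag[OF k] binary_kernel_on_sym[OF k] assms(2,3) by metis
  then show ?thesis using False by auto
qed

lemma sum_indicator_bij_betw:
  assumes "bij_betw Q I A" "c \<in> A" "finite I"
  shows "(\<Sum>i\<in>I. if Q i = c then 1 else 0) = (1::real)"
proof -
  obtain i0 where i0: "i0 \<in> I" "Q i0 = c"
    using assms(1,2) unfolding bij_betw_def by blast
  have "Q i = c \<longleftrightarrow> i = i0" if "i \<in> I" for i
    using assms(1) i0 that unfolding bij_betw_def inj_on_def by blast
  then have "(\<Sum>i\<in>I. if Q i = c then 1 else 0) = (\<Sum>i\<in>I. if i = i0 then 1 else (0::real))"
    by (intro sum.cong) auto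
  then show ?thesis using i0(1) assms(3) by simp
qed

theorem proposition3:
  fixes X :: "'a set" and k :: "'a \<Rightarrow> 'a \<Rightarrow> real"
    and d :: nat and Q :: "nat \<Rightarrow> 'a set" and phi :: "'a \<Rightarrow> nat \<Rightarrow> real"
  assumes "X \<noteq> {}"
    and "binary_kernel_on X k"
    and "finite (Qk X k)"
    and "bij_betw Q {1..d} (Qk X k)"
    and "\<And>x i. phi x i = (if x \<in> Xref X k \<and> Q i = kclass X k x then 1 else 0)"
  shows "\<forall>x\<in>X. \<forall>y\<in>X. k x y = (\<Sum>i=1..d. phi x i * phi y i)"
proof (intro ballI)
  fix x y assume "x \<in> X" "y \<in> X"
  define same where "same \<longleftrightarrow> x \<in> Xref X k \<and> y \<in> Xref X k \<and> kclass X k x = kclass X k y"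
  have "k x y = (if same then 1 else 0)"
    using binary_kernel_on_eq_same_class[OF assms(2) \<open>x \<in> X\<close> \<open>y \<in> X\<close>] by (simp add: same_def)
  moreover have "(\<Sum>i=1..d. phi x i * phi y i) = (if same then 1 else 0)"
  proof (cases same)
    case True
    then have "phi x i * phi y i = (if Q i = kclass X k x then 1 else 0)" for i
      unfolding same_def assms(5) by auto
    moreover have "kclass X k x \<in> Qk X k"
      using True by (simp add: same_def kclass_in_Qk)
    ultimately show ?thesis
      using True sum_indicator_bij_betw[OF assms(4)] by simp
  next
    case False
    then have "phi x i * phi y i = 0" for i
      unfolding same_def assms(5) by auto
    then show ?thesis using False by (simp del: mult_eq_0_iff)
  qed
  ultimately show "k x y = (\<Sum>i=1..d. phi x i * phi y i)" by simp
qed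

end
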